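(* Let $K\subset\mathbb{R}^n$ be a convex body and $c\in\mathbb{R}^n$ such that $c+r(K)\mathbb{B}$ is an inball and $\mathbb{B}$ is the circumball of $K$. Let $k\in\{2,\dots,n+1\}$ and $p^1,\dots,p^k\in K\cap\mathbb{S}$ with $0\in\mathrm{conv}\{p^1,\dots,p^k\}$, and set $T':=\mathrm{conv}\{p^1,\dots,p^k\}$ and $C:=\mathrm{conv}\big(T'\cup(c+r(K)\mathbb{B})\big)$. Then \[ D(C)=\max\{D(T'),\ \|p^i-c\|+r(C)\ :\ i\in[k]\}. \]
   Context: $\mathbb{B}$, $\mathbb{S}$ are the Euclidean unit ball and sphere; $r(\cdot)$ is the inradius (radius of a largest contained ball), $D(\cdot)$ the diameter. The circumball is the smallest ball containing $K$; an inball is a largest ball contained in $K$. $[k]=\{1,\dots,k\}$. *)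

theory Defs
  imports "HOL-Analysis.Analysis"
begin

definition convex_body :: "'a::euclidean_space set \<Rightarrow> bool" where
  "convex_body K \<longleftrightarrow> compact K \<and> convex K \<and> interior K \<noteq> {}"

definition inradius :: "'a::euclidean_space set \<Rightarrow> real" where
  "inradius K = Sup {\<rho>. \<rho> \<ge> 0 \<and> (\<exists>x. cball x \<rho> \<subseteq> K)}"

definition is_inball :: "'a::euclidean_space \<Rightarrow> real \<Rightarrow> 'a set \<Rightarrow> bool" where
  "is_inball x \<rho> K \<longleftrightarrow> cball x \<rho> \<subseteq> K \<and> (\<forall>y \<sigma>. cball y \<sigma> \<subseteq> K \<longrightarrow> \<sigma> \<le> \<rho>)"

definition is_circumball :: "'a::euclidean_space \<Rightarrow> real \<Rightarrow> 'a set \<Rightarrow> bool" where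
  "is_circumball x \<rho> K \<longleftrightarrow> K \<subseteq> cball x \<rho> \<and> (\<forall>y \<sigma>. K \<subseteq> cball y \<sigma> \<longrightarrow> \<rho> \<le> \<sigma>)"

end

theory Submission
  imports Defs
begin

text \<open>Passing to the convex hull does not change the diameter, so it suffices to measure the
  union of the polytope \<open>T'\<close> and the inball. Two points of \<open>T'\<close> are at most \<open>D(T')\<close> apart,
  a vertex \<open>p\<close> and a point of the ball at most \<open>\<parallel>p - c\<parallel> + r\<close> (attained on the ray from \<open>p\<close>
  through \<open>c\<close>), and this also bounds distances from non-vertices of \<open>T'\<close>, since
  \<open>T' \<subseteq> cball c (max\<^sub>i \<parallel>p\<^sup>i - c\<parallel>)\<close>. Two points of the ball are at most \<open>2r\<close> apart, which
  is dominated because the inball lies in the unit circumball while the \<open>p\<^sup>i\<close> lie on its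
  boundary. Finally \<open>C\<close> sits between the inball of \<open>K\<close> and \<open>K\<close>, so \<open>r(C) = r(K)\<close>.\<close>

lemma diameter_convex_hull:
  fixes S :: "'a::real_normed_vector set"
  assumes "bounded S"
  shows "diameter (convex hull S) = diameter S"
proof (cases "S = {}")
  case False
  let ?d = "diameter S"
  have "convex hull S \<subseteq> cball x ?d" if "x \<in> S" for x
    using diameter_bounded_bound[OF assms that] by (intro hull_minimal) (auto simp: subset_iff)
  then have "convex hull S \<subseteq> cball y ?d" if "y \<in> convex hull S" for y
    using that by (intro hull_minimal) (auto simp: subset_iff dist_commute)
  then have "diameter (convex hull S) \<le> ?d"
    by (intro diameter_le) (auto simp: False dist_norm subset_iff)
  moreover have "?d \<le> diameter (convex hull S)"
    using assms by (intro diameter_subset hull_subset bounded_convex_hull)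
  ultimately show ?thesis by linarith
qed simp

lemma farthest_point_in_cball:
  fixes x c :: "'a::euclidean_space"
  assumes "0 \<le> r"
  obtains y where "y \<in> cball c r" and "dist x y = dist x c + r"
proof (cases "x = c")
  case True
  obtain u :: 'a where "norm u = r" using vector_choose_size assms by blast
  with True show ?thesis by (intro that[of "c + u"]) (auto simp: dist_norm)
next
  case False
  define d where "d = dist x c"
  have "d > 0" using False by (simp add: d_def)
  define y where "y = c + (r / d) *\<^sub>R (c - x)"
  have "x - y = - ((1 + r / d) *\<^sub>R (c - x))" by (simp add: y_def algebra_simps)
  then have "dist x y = (1 + r / d) * d"
    using \<open>d > 0\<close> assms by (simp add: dist_norm d_def norm_minus_commute)
  also have "\<dots> = d + r" using \<open>d > 0\<close> by (simp add: field_simps)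
  finally show ?thesis
    using \<open>d > 0\<close> assms by (intro that[of y]) (auto simp: y_def dist_norm d_def norm_minus_commute)
qed

lemma diameter_Un_cball_le:
  fixes T :: "'a::real_normed_vector set"
  assumes "bounded T" and "diameter T \<le> M" and "T \<subseteq> cball c (M - r)"
    and "0 \<le> r" and "2 * r \<le> M"
  shows "diameter (T \<union> cball c r) \<le> M"
proof (rule diameter_le)
  fix x y assume xy: "x \<in> T \<union> cball c r" "y \<in> T \<union> cball c r"
  have "dist x y \<le> dist x c + dist c y" by (rule dist_triangle)
  moreover have "dist x y \<le> M" if "x \<in> T" "y \<in> T"
    using diameter_bounded_bound[OF assms(1) that] assms(2) by linarith
  ultimately show "norm (x - y) \<le> M"
    using xy assms(3,5) by (auto simp: dist_norm norm_minus_commute subset_iff)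
qed (use assms(4,5) in auto)

lemma diameter_convex_hull_Un_cball:
  fixes p :: "'i \<Rightarrow> 'a::euclidean_space"
  assumes "finite I" and "0 \<le> r" and "j \<in> I" and "r \<le> norm (p j - c)"
  shows "diameter (convex hull (convex hull (p ` I) \<union> cball c r)) =
    Max ({diameter (convex hull (p ` I))} \<union> {norm (p i - c) + r | i. i \<in> I})"
    (is "diameter (convex hull (?T \<union> ?B)) = Max ?A")
proof -
  have bT: "bounded ?T" and bTB: "bounded (?T \<union> ?B)"
    using assms(1) by (auto intro: bounded_convex_hull finite_imp_bounded)
  have finA: "finite ?A" using assms(1) by auto
  have "diameter (?T \<union> ?B) \<le> Max ?A"
  proof (rule diameter_Un_cball_le[OF bT _ _ assms(2)])
    show "diameter ?T \<le> Max ?A" using finA by auto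
    have vertex_le: "norm (p i - c) + r \<le> Max ?A" if "i \<in> I" for i
      using finA that by (intro Max_ge) auto
    then show "?T \<subseteq> cball c (Max ?A - r)"
      by (intro hull_minimal) (force simp: dist_norm norm_minus_commute, simp)
    show "2 * r \<le> Max ?A" using vertex_le[OF assms(3)] assms(4) by linarith
  qed
  moreover have "a \<le> diameter (?T \<union> ?B)" if "a \<in> ?A" for a
  proof -
    have "norm (p i - c) + r \<le> diameter (?T \<union> ?B)" if "i \<in> I" for i
    proof -
      obtain y where "y \<in> ?B" "dist (p i) y = dist (p i) c + r"
        using farthest_point_in_cball[OF assms(2)] .
      moreover have "p i \<in> ?T" using that hull_subset by fastforce
      ultimately show ?thesis
        using diameter_bounded_bound[OF bTB, of "p i" y] by (simp add: dist_norm)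
    qed
    moreover have "diameter ?T \<le> diameter (?T \<union> ?B)" using bTB by (intro diameter_subset) auto
    ultimately show ?thesis using \<open>a \<in> ?A\<close> by blast
  qed
  then have "Max ?A \<le> diameter (?T \<union> ?B)" using finA by (intro Max.boundedI) auto
  ultimately show ?thesis using diameter_convex_hull[OF bTB] by linarith
qed

lemma is_inball_radius_nonneg:
  assumes "is_inball x \<rho> K" and "y \<in> K"
  shows "0 \<le> \<rho>"
  using assms by (auto simp: is_inball_def dest: spec[of _ y] spec[of _ 0])

lemma inradius_eq_if_between_inball:
  assumes "is_inball x \<rho> K" and "0 \<le> \<rho>" and "cball x \<rho> \<subseteq> C" and "C \<subseteq> K"
  shows "inradius C = \<rho>"
  unfolding inradius_def
proof (rule cSup_eq_maximum)
  show "\<rho> \<in> {\<sigma>. 0 \<le> \<sigma> \<and> (\<exists>y. cball y \<sigma> \<subseteq> C)}" using assms(2,3) by auto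
qed (use assms(1,4) in \<open>auto simp: is_inball_def dest: subset_trans\<close>)

theorem corollary5p6:
  fixes K :: "(real ^ 'n) set" and c :: "real ^ 'n" and k :: nat and p :: "nat \<Rightarrow> real ^ 'n"
  assumes "convex_body K"
    and "is_inball c (inradius K) K"
    and "is_circumball 0 1 K"
    and "2 \<le> k" and "k \<le> CARD('n) + 1"
    and "\<And>i. i \<in> {1..k} \<Longrightarrow> p i \<in> K \<inter> sphere 0 1"
    and "0 \<in> convex hull (p ` {1..k})"
  shows "diameter (convex hull (convex hull (p ` {1..k}) \<union> cball c (inradius K))) =
    Max ({diameter (convex hull (p ` {1..k}))} \<union>
         {norm (p i - c) + inradius (convex hull (convex hull (p ` {1..k}) \<union> cball c (inradius K))) | i. i \<in> {1..k}})"
proof -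
  let ?r = "inradius K" and ?C = "convex hull (convex hull (p ` {1..k}) \<union> cball c (inradius K))"
  have one: "1 \<in> {1..k}" using assms(4) by simp
  have r: "0 \<le> ?r" using is_inball_radius_nonneg[OF assms(2)] assms(6)[OF one] by blast
  have ball: "cball c ?r \<subseteq> K" using assms(2) by (simp add: is_inball_def)
  then have "cball c ?r \<subseteq> cball 0 1" using assms(3) by (auto simp: is_circumball_def)
  then have "norm c + ?r \<le> 1" using r by (simp add: cball_subset_cball_iff)
  then have r_le: "?r \<le> norm (p 1 - c)"
    using assms(6)[OF one] norm_triangle_ineq2[of "p 1" c] by simp
  have "convex K" using assms(1) by (simp add: convex_body_def)
  moreover have "convex hull (p ` {1..k}) \<subseteq> K"
    using assms(6) \<open>convex K\<close> by (intro hull_minimal) auto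
  ultimately have "?C \<subseteq> K" using ball by (intro hull_minimal) auto
  moreover have "cball c ?r \<subseteq> ?C" by (meson hull_subset le_sup_iff)
  ultimately have "inradius ?C = ?r" using inradius_eq_if_between_inball[OF assms(2) r] by blast
  then show ?thesis
    using diameter_convex_hull_Un_cball[of "{1..k}" _ 1 p c, OF _ r one r_le] by simp
qed

end
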